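(* Fix a constant $d\ge 0$. There is a routing labeling scheme for the family of rooted trees on $n$ nodes of depth at most $d$ with labels of length $\log n+\mathcal{O}(\log\log n)$ bits. The constant in the $\mathcal{O}(\cdot)$ may depend on $d$.
   Context: All logarithms are base $2$. The depth of a rooted tree is the maximum number of edges on a path from the root to a node. A (designer-port) routing labeling scheme for a family $\mathcal{T}$ of rooted trees consists of an encoder and a decoder. - The encoder is given $T\in\mathcal{T}$. It assigns a binary string (label) $\ell(u)$ to every node $u$. It also labels the edges from each node $u$ to its $\deg(u)$ children with distinct port numbers from $\{1,\dots,\deg(u)\}$; the encoder is free to choose these port numbers. - The decoder receives only $\ell(u)$ and $\ell(w)$ for nodes $u\neq w$ of some $T\in\mathcal{T}$; the value $\lceil\log n\rceil$, where $n=|T|$, may also be assumed known. It must return $0$ if the next node on the path from $u$ to $w$ is the parent of $u$. Otherwise it must return the port number of the first edge on that path. - The length of the scheme is the maximum label length over all trees in $\mathcal{T}$ and all their nodes. *)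

theory Defs
  imports Complex_Main
begin

text \<open>A rooted tree on n nodes is represented with node set {0..<n}, a root r, and a
parent function p. By convention p r = r (the root has no parent). Every node reaches
the root by iterating p.\<close>

definition rooted_tree :: "nat \<Rightarrow> (nat \<Rightarrow> nat) \<Rightarrow> nat \<Rightarrow> bool" where
  "rooted_tree n p r \<longleftrightarrow> r < n \<and> p r = r \<and>
     (\<forall>u<n. p u < n) \<and> (\<forall>u<n. \<exists>k. (p ^^ k) u = r)"

definition depth_le :: "nat \<Rightarrow> (nat \<Rightarrow> nat) \<Rightarrow> nat \<Rightarrow> nat \<Rightarrow> bool" where
  "depth_le n p r d \<longleftrightarrow> (\<forall>u<n. \<exists>k\<le>d. (p ^^ k) u = r)"

definition children :: "nat \<Rightarrow> (nat \<Rightarrow> nat) \<Rightarrow> nat \<Rightarrow> nat \<Rightarrow> nat set" where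
  "children n p r u = {v. v < n \<and> v \<noteq> r \<and> p v = u}"

text \<open>port v is the port number of the edge from p v to its child v; the ports of the
children of u are distinct numbers in {1..deg u}.\<close>
definition valid_ports :: "nat \<Rightarrow> (nat \<Rightarrow> nat) \<Rightarrow> nat \<Rightarrow> (nat \<Rightarrow> nat) \<Rightarrow> bool" where
  "valid_ports n p r port \<longleftrightarrow> (\<forall>u<n.
     inj_on port (children n p r u) \<and>
     port ` children n p r u \<subseteq> {1..card (children n p r u)})"

definition proper_desc :: "(nat \<Rightarrow> nat) \<Rightarrow> nat \<Rightarrow> nat \<Rightarrow> bool" where
  "proper_desc p u w \<longleftrightarrow> (\<exists>k\<ge>1. (p ^^ k) w = u)"

text \<open>The decoder, given ceiling(log n) and the labels of u and w (u different from w),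
returns 0 if the next hop from u towards w is the parent of u, and otherwise the port
of the edge from u to its child on the path to w.\<close>
definition routes :: "nat \<Rightarrow> (nat \<Rightarrow> nat) \<Rightarrow> nat \<Rightarrow> (nat \<Rightarrow> bool list) \<Rightarrow> (nat \<Rightarrow> nat)
     \<Rightarrow> (nat \<Rightarrow> bool list \<Rightarrow> bool list \<Rightarrow> nat) \<Rightarrow> bool" where
  "routes n p r lab port dec \<longleftrightarrow> (\<forall>u<n. \<forall>w<n. u \<noteq> w \<longrightarrow>
     (let out = dec (nat \<lceil>log 2 (real n)\<rceil>) (lab u) (lab w) in
       (\<not> proper_desc p u w \<longrightarrow> out = 0) \<and>
       (\<forall>v\<in>children n p r u. (\<exists>j. (p ^^ j) w = v) \<longrightarrow> out = port v)))"

end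

theory Submission
  imports Defs "HOL-Library.Sublist" "HOL-Library.Product_Lexorder"
begin

text \<open>Number the children of every node by non-increasing subtree size. A child with port
  \<open>i\<close> has \<open>i - 1\<close> siblings at least as heavy as itself, so \<open>port v * |T v| \<le> |T (p v)|\<close>,
  and the ports along any root path multiply to at most \<open>n\<close>. A node is labelled by the port
  sequence of its root path, of length at most \<open>d\<close>: the binary representations of the ports
  are concatenated, which costs \<open>log n + O(d)\<close> bits, and preceded by their bit lengths written
  as a number in base \<open>\<lceil>log n\<rceil> + 2\<close>, which costs \<open>d log (\<lceil>log n\<rceil> + 2)\<close> bits. The decoder
  recovers both port sequences: if that of \<open>u\<close> is a proper prefix of that of \<open>w\<close>, its next
  entry is the port towards \<open>w\<close>; otherwise \<open>w\<close> is not below \<open>u\<close> and the route goes up.\<close>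

fun bits :: "nat \<Rightarrow> bool list" where
  "bits m = (if m = 0 then [] else odd m # bits (m div 2))"

declare bits.simps [simp del]

abbreviation bit_length :: "nat \<Rightarrow> nat" where
  "bit_length m \<equiv> length (bits m)"

lemma bits_0 [simp]: "bits 0 = []"
  by (simp add: bits.simps)

lemma bits_pos [simp]: "m \<noteq> 0 \<Longrightarrow> bits m = odd m # bits (m div 2)"
  by (simp add: bits.simps)

lemma bits_inject: "bits a = bits b \<Longrightarrow> a = b"
proof (induction a arbitrary: b rule: bits.induct)
  case (1 a)
  show ?case
  proof (cases "a = 0")
    case True
    with "1.prems" show ?thesis
      by (cases "b = 0") auto
  next
    case False
    with "1.prems" have "b \<noteq> 0"
      by (cases "b = 0") auto
    with "1.prems" False have parity: "odd a = odd b" and "bits (a div 2) = bits (b div 2)"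
      by simp_all
    with "1.IH" False have "a div 2 = b div 2"
      by blast
    with parity show ?thesis
      by (metis odd_two_times_div_two_succ even_two_times_div_two)
  qed
qed

lemma less_two_power_bit_length: "m < 2 ^ bit_length m"
  by (induction m rule: bits.induct) (case_tac "m = 0"; simp)

lemma two_power_bit_length_le: "0 < m \<Longrightarrow> 2 ^ bit_length m \<le> 2 * m"
  by (induction m rule: bits.induct) (case_tac "m = 1"; simp)

lemma bit_length_le:
  assumes "0 < m" and "m \<le> 2 ^ k"
  shows "bit_length m \<le> Suc k"
proof -
  have "(2::nat) ^ bit_length m \<le> 2 ^ Suc k"
    using two_power_bit_length_le[OF assms(1)] assms(2) by simp
  then show ?thesis
    by (rule power_le_imp_le_exp[rotated]) simp
qed

lemma bit_length_less_log:
  assumes "m < X"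
  shows "real (bit_length m) < 1 + log 2 (real X)"
proof (cases "m = 0")
  case True
  from assms have "0 \<le> log 2 (real X)"
    by simp
  with True show ?thesis
    by simp
next
  case False
  then have "2 ^ bit_length m \<le> 2 * m"
    using two_power_bit_length_le by blast
  then have "real (2 ^ bit_length m) \<le> real (2 * m)"
    by (simp only: of_nat_le_iff)
  then have "2 powr real (bit_length m) \<le> real (2 * m)"
    by (simp add: powr_realpow)
  also have "\<dots> < 2 * real X"
    using assms by simp
  finally have "real (bit_length m) < log 2 (2 * real X)"
    using assms by (simp add: less_log_iff)
  then show ?thesis
    using assms by (simp add: log_mult)
qed

lemma le_two_power_ceiling_log:
  assumes n: "0 < n"
  shows "n \<le> 2 ^ nat \<lceil>log 2 (real n)\<rceil>"
proof -
  have "real n = 2 powr log 2 (real n)"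
    using n by simp
  also have "\<dots> \<le> 2 powr real (nat \<lceil>log 2 (real n)\<rceil>)"
    using n by (intro powr_mono) auto
  also have "\<dots> = real (2 ^ nat \<lceil>log 2 (real n)\<rceil>)"
    by (simp add: powr_realpow)
  finally show ?thesis
    by (simp only: of_nat_le_iff)
qed

lemma add_mult_inject:
  fixes B x y :: nat
  assumes "x < B" and "y < B" and eq: "x + B * a = y + B * b"
  shows "x = y" and "a = b"
proof -
  have "x = (x + B * a) mod B" "a = (x + B * a) div B"
    using assms(1) by simp_all
  moreover have "y = (y + B * b) mod B" "b = (y + B * b) div B"
    using assms(2) by simp_all
  ultimately show "x = y" and "a = b"
    unfolding eq by simp_all
qed

fun radix_value :: "nat \<Rightarrow> nat list \<Rightarrow> nat" where
  "radix_value B [] = 0"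
| "radix_value B (x # xs) = x + B * radix_value B xs"

lemma radix_value_less: "set xs \<subseteq> {..<B} \<Longrightarrow> radix_value B xs < B ^ length xs"
proof (induction xs)
  case (Cons x xs)
  then have "x + B * radix_value B xs < B + B * radix_value B xs"
    by simp
  also have "\<dots> \<le> B * B ^ length xs"
    using Cons by (simp add: Suc_le_eq flip: mult_Suc_right)
  finally show ?case
    by simp
qed simp

lemma radix_value_inject:
  "set xs \<subseteq> {0<..<B} \<Longrightarrow> set ys \<subseteq> {0<..<B} \<Longrightarrow> radix_value B xs = radix_value B ys \<Longrightarrow> xs = ys"
proof (induction xs arbitrary: ys)
  case Nil
  then show ?case
    by (cases ys) auto
next
  case (Cons x xs)
  then obtain y ys' where ys: "ys = y # ys'"
    by (cases ys) auto
  with Cons.prems have "x < B" "y < B" and "x + B * radix_value B xs = y + B * radix_value B ys'"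
    by auto
  then have "x = y" and "radix_value B xs = radix_value B ys'"
    by (rule add_mult_inject)+
  with Cons ys show ?case
    by simp
qed

fun concat_bits :: "nat list \<Rightarrow> nat" where
  "concat_bits [] = 0"
| "concat_bits (x # xs) = x + 2 ^ bit_length x * concat_bits xs"

lemma concat_bits_inject:
  "map bit_length xs = map bit_length ys \<Longrightarrow> concat_bits xs = concat_bits ys \<Longrightarrow> xs = ys"
proof (induction xs arbitrary: ys)
  case (Cons x xs)
  then obtain y ys' where ys: "ys = y # ys'" and len: "bit_length x = bit_length y"
    and lens: "map bit_length xs = map bit_length ys'"
    by (cases ys) auto
  have "x < 2 ^ bit_length x" "y < 2 ^ bit_length x"
    using less_two_power_bit_length[of x] less_two_power_bit_length[of y] len by simp_all
  moreover have "x + 2 ^ bit_length x * concat_bits xs = y + 2 ^ bit_length x * concat_bits ys'"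
    using Cons.prems ys len by simp
  ultimately have "x = y" and "concat_bits xs = concat_bits ys'"
    by (rule add_mult_inject)+
  with Cons.IH lens ys show ?case
    by simp
qed simp

lemma concat_bits_less: "concat_bits xs < 2 ^ sum_list (map bit_length xs)"
proof (induction xs)
  case (Cons x xs)
  have "concat_bits (x # xs) < 2 ^ bit_length x * (concat_bits xs + 1)"
    using less_two_power_bit_length[of x] by simp
  also have "\<dots> \<le> 2 ^ bit_length x * 2 ^ sum_list (map bit_length xs)"
    using Cons.IH by (intro mult_left_mono) auto
  finally show ?case
    by (simp add: power_add)
qed simp

lemma two_power_sum_bit_length_le:
  "set xs \<subseteq> {0<..} \<Longrightarrow> 2 ^ sum_list (map bit_length xs) \<le> 2 ^ length xs * prod_list xs"
proof (induction xs)
  case (Cons x xs)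
  then have "2 ^ bit_length x * 2 ^ sum_list (map bit_length xs) \<le> (2 * x) * (2 ^ length xs * prod_list xs)"
    using two_power_bit_length_le[of x] by (intro mult_mono) auto
  then show ?case
    by (simp add: power_add algebra_simps)
qed simp

text \<open>The bit lengths, written as a number below \<open>B ^ d\<close>, delimit the concatenated
  binary representations.\<close>

definition codable :: "nat \<Rightarrow> nat \<Rightarrow> nat list \<Rightarrow> bool" where
  "codable B d xs \<longleftrightarrow> length xs \<le> d \<and> set xs \<subseteq> {0<..} \<and> set (map bit_length xs) \<subseteq> {..<B}"

definition seq_code :: "nat \<Rightarrow> nat \<Rightarrow> nat list \<Rightarrow> nat" where
  "seq_code B d xs = radix_value B (map bit_length xs) + B ^ d * concat_bits xs"

lemma radix_value_bit_lengths_less: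
  assumes "0 < B" and "codable B d xs"
  shows "radix_value B (map bit_length xs) < B ^ d"
proof -
  have "radix_value B (map bit_length xs) < B ^ length xs"
    using assms(2) radix_value_less[of "map bit_length xs" B] by (simp add: codable_def)
  also have "\<dots> \<le> B ^ d"
    using assms by (intro power_increasing) (auto simp: codable_def)
  finally show ?thesis .
qed

lemma seq_code_inject:
  assumes "0 < B" and "codable B d xs" and "codable B d ys" and eq: "seq_code B d xs = seq_code B d ys"
  shows "xs = ys"
proof -
  have "radix_value B (map bit_length xs) = radix_value B (map bit_length ys)"
    and "concat_bits xs = concat_bits ys"
    using radix_value_bit_lengths_less[OF assms(1,2)] radix_value_bit_lengths_less[OF assms(1,3)] eq
    unfolding seq_code_def by (rule add_mult_inject)+
  moreover have "set (map bit_length zs) \<subseteq> {0<..<B}" if "codable B d zs" for zs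
    using that unfolding codable_def by (auto simp: subset_iff)
  ultimately show ?thesis
    using assms(2,3) radix_value_inject concat_bits_inject by blast
qed

lemma seq_code_less:
  assumes "0 < B" and "codable B d xs"
  shows "seq_code B d xs < B ^ d * 2 ^ d * prod_list xs"
proof -
  have "seq_code B d xs < B ^ d * (concat_bits xs + 1)"
    using radix_value_bit_lengths_less[OF assms] by (simp add: seq_code_def)
  also have "\<dots> \<le> B ^ d * 2 ^ sum_list (map bit_length xs)"
    using concat_bits_less[of xs] by (intro mult_left_mono) auto
  also have "\<dots> \<le> B ^ d * (2 ^ length xs * prod_list xs)"
    using assms(2) two_power_sum_bit_length_le by (intro mult_left_mono) (auto simp: codable_def)
  also have "\<dots> \<le> B ^ d * (2 ^ d * prod_list xs)"
    using assms(2) by (intro mult_left_mono mult_right_mono power_increasing) (auto simp: codable_def)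
  finally show ?thesis
    by (simp add: mult.assoc)
qed

definition seq_decode :: "nat \<Rightarrow> nat \<Rightarrow> bool list \<Rightarrow> nat list" where
  "seq_decode B d a = (SOME xs. codable B d xs \<and> bits (seq_code B d xs) = a)"

lemma seq_decode_bits_seq_code:
  assumes "0 < B" and "codable B d xs"
  shows "seq_decode B d (bits (seq_code B d xs)) = xs"
  unfolding seq_decode_def
  using assms by (auto intro!: some_equality dest: bits_inject seq_code_inject)

definition rank :: "('a \<Rightarrow> 'b::linorder) \<Rightarrow> 'a set \<Rightarrow> 'a \<Rightarrow> nat" where
  "rank f A x = card {y \<in> A. f y \<le> f x}"

lemma rank_mono_strict:
  assumes "finite A" and "x \<in> A" and "y \<in> A" and "f x < f y"
  shows "rank f A x < rank f A y"
proof -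
  have "{z \<in> A. f z \<le> f x} \<subseteq> {z \<in> A. f z \<le> f y}"
    using assms(4) by auto
  moreover have "y \<in> {z \<in> A. f z \<le> f y} - {z \<in> A. f z \<le> f x}"
    using assms(3,4) by simp
  ultimately have "{z \<in> A. f z \<le> f x} \<subset> {z \<in> A. f z \<le> f y}"
    by blast
  then show ?thesis
    unfolding rank_def using assms(1) by (intro psubset_card_mono) auto
qed

lemma rank_inj_on:
  assumes "finite A" and "inj_on f A"
  shows "inj_on (rank f A) A"
proof (rule inj_onI, rule ccontr)
  fix x y
  assume "x \<in> A" "y \<in> A" "rank f A x = rank f A y" "x \<noteq> y"
  with assms show False
    using rank_mono_strict[of A x y f] rank_mono_strict[of A y x f]
    by (metis inj_on_contraD less_irrefl neqE)
qed

lemma rank_in_range: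
  assumes "finite A" and "x \<in> A"
  shows "rank f A x \<in> {1..card A}"
proof -
  have "x \<in> {y \<in> A. f y \<le> f x}"
    using assms(2) by simp
  then have "0 < rank f A x"
    unfolding rank_def using assms(1) by (auto simp: card_gt_0_iff)
  moreover have "rank f A x \<le> card A"
    unfolding rank_def using assms(1) by (intro card_mono) auto
  ultimately show ?thesis
    by simp
qed

lemma mem_children_iff: "v \<in> children n p r u \<longleftrightarrow> v < n \<and> v \<noteq> r \<and> p v = u"
  by (simp add: children_def)

lemma finite_children: "finite (children n p r u)"
  by (simp add: children_def)

locale parent_tree =
  fixes n :: nat and p :: "nat \<Rightarrow> nat" and r :: nat
  assumes rooted: "rooted_tree n p r"
begin

lemma root_less: "r < n"
  and parent_root [simp]: "p r = r"
  and parent_less: "u < n \<Longrightarrow> p u < n"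
  and reaches_root: "u < n \<Longrightarrow> \<exists>k. (p ^^ k) u = r"
  using rooted by (auto simp: rooted_tree_def)

lemma funpow_less: "u < n \<Longrightarrow> (p ^^ j) u < n"
  by (induction j) (auto simp: parent_less)

lemma funpow_root [simp]: "(p ^^ j) r = r"
  by (induction j) auto

definition depth :: "nat \<Rightarrow> nat" where
  "depth u = (LEAST k. (p ^^ k) u = r)"

lemma funpow_depth: "u < n \<Longrightarrow> (p ^^ depth u) u = r"
  unfolding depth_def using reaches_root by (auto intro: LeastI_ex)

lemma depth_least: "(p ^^ k) u = r \<Longrightarrow> depth u \<le> k"
  unfolding depth_def by (rule Least_le)

lemma funpow_ge_depth:
  assumes "u < n" and "depth u \<le> j"
  shows "(p ^^ j) u = r"
proof -
  have "(p ^^ j) u = (p ^^ ((j - depth u) + depth u)) u"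
    using assms(2) by simp
  also have "\<dots> = (p ^^ (j - depth u)) ((p ^^ depth u) u)"
    by (simp only: funpow_add comp_apply)
  finally show ?thesis
    using assms(1) by (simp add: funpow_depth)
qed

lemma depth_funpow:
  assumes "u < n" and "j \<le> depth u"
  shows "depth ((p ^^ j) u) = depth u - j"
proof (rule antisym)
  have "(p ^^ (depth u - j)) ((p ^^ j) u) = (p ^^ ((depth u - j) + j)) u"
    by (simp only: funpow_add comp_apply)
  also have "\<dots> = (p ^^ depth u) u"
    using assms(2) by simp
  finally have "(p ^^ (depth u - j)) ((p ^^ j) u) = (p ^^ depth u) u" .
  then have "(p ^^ (depth u - j)) ((p ^^ j) u) = r"
    using assms(1) by (simp add: funpow_depth)
  then show "depth ((p ^^ j) u) \<le> depth u - j"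
    by (rule depth_least)
  have "(p ^^ (depth ((p ^^ j) u) + j)) u = r"
    using assms by (simp add: funpow_add funpow_depth funpow_less)
  then show "depth u - j \<le> depth ((p ^^ j) u)"
    using depth_least by fastforce
qed

lemma depth_eq_0_iff: "u < n \<Longrightarrow> depth u = 0 \<longleftrightarrow> u = r"
  using funpow_depth depth_least[of 0 r] by fastforce

lemma depth_parent: "u < n \<Longrightarrow> u \<noteq> r \<Longrightarrow> depth u = Suc (depth (p u))"
  using depth_funpow[of u 1] depth_eq_0_iff[of u] by simp

lemma funpow_add_depth:
  assumes "w < n" and "(p ^^ j) w = a" and "a \<noteq> r"
  shows "j + depth a = depth w"
proof -
  have "j < depth w"
    using assms funpow_ge_depth[of w j] by (meson not_less)
  then show ?thesis
    using assms depth_funpow[of w j] by simp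
qed

lemma depth_induct [consumes 1, case_names root parent]:
  assumes "u < n" and "P r" and "\<And>w. w < n \<Longrightarrow> w \<noteq> r \<Longrightarrow> P (p w) \<Longrightarrow> P w"
  shows "P u"
  using assms(1)
proof (induction "depth u" arbitrary: u)
  case 0
  then show ?case
    using assms(2) depth_eq_0_iff by simp
next
  case (Suc m)
  then have "u \<noteq> r"
    by (metis depth_eq_0_iff nat.distinct(1))
  with Suc show ?case
    using assms(3) depth_parent parent_less by simp
qed

definition subtree :: "nat \<Rightarrow> nat set" where
  "subtree u = {w. w < n \<and> (\<exists>j. (p ^^ j) w = u)}"

definition subtree_size :: "nat \<Rightarrow> nat" where
  "subtree_size u = card (subtree u)"

lemma subtree_size_le: "subtree_size u \<le> n"
proof -
  have "subtree u \<subseteq> {..<n}"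
    by (auto simp: subtree_def)
  then show ?thesis
    unfolding subtree_size_def using card_mono[of "{..<n}"] by fastforce
qed

lemma subtree_size_pos: "u < n \<Longrightarrow> 0 < subtree_size u"
proof -
  assume "u < n"
  then have "u \<in> subtree u"
    unfolding subtree_def by (auto intro: exI[of _ 0])
  then show ?thesis
    unfolding subtree_size_def subtree_def by (auto simp: card_gt_0_iff)
qed

lemma subtree_child_subset: "v \<in> children n p r u \<Longrightarrow> subtree v \<subseteq> subtree u"
proof
  fix w
  assume v: "v \<in> children n p r u" and "w \<in> subtree v"
  then obtain j where "w < n" "(p ^^ j) w = v"
    by (auto simp: subtree_def)
  with v have "(p ^^ Suc j) w = u"
    by (simp add: mem_children_iff)
  with \<open>w < n\<close> show "w \<in> subtree u"
    unfolding subtree_def by blast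
qed

text \<open>Two children of \<open>u\<close> have the same depth, so an ancestor of \<open>w\<close> that is a child of \<open>u\<close>
  is determined by the number of parent steps from \<open>w\<close>.\<close>

lemma disjoint_subtrees_children:
  assumes v1: "v1 \<in> children n p r u" and v2: "v2 \<in> children n p r u" and "v1 \<noteq> v2"
  shows "subtree v1 \<inter> subtree v2 = {}"
proof (rule ccontr)
  assume "subtree v1 \<inter> subtree v2 \<noteq> {}"
  then obtain w j1 j2 where w: "w < n" and j1: "(p ^^ j1) w = v1" and j2: "(p ^^ j2) w = v2"
    by (auto simp: subtree_def)
  have "depth v1 = depth v2"
    using v1 v2 depth_parent by (simp add: mem_children_iff)
  moreover have "j1 + depth v1 = depth w" and "j2 + depth v2 = depth w"
    using v1 v2 funpow_add_depth[OF w j1] funpow_add_depth[OF w j2] by (auto simp: mem_children_iff)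
  ultimately have "j1 = j2"
    by simp
  with j1 j2 \<open>v1 \<noteq> v2\<close> show False
    by simp
qed

lemma sum_subtree_size_children_le: "(\<Sum>v\<in>children n p r u. subtree_size v) \<le> subtree_size u"
proof -
  have "(\<Sum>v\<in>children n p r u. subtree_size v) = card (\<Union>v\<in>children n p r u. subtree v)"
    unfolding subtree_size_def using disjoint_subtrees_children finite_children
    by (intro card_UN_disjoint[symmetric]) (auto simp: subtree_def)
  also have "\<dots> \<le> subtree_size u"
  proof -
    have "(\<Union>v\<in>children n p r u. subtree v) \<subseteq> subtree u"
      using subtree_child_subset by blast
    then show ?thesis
      unfolding subtree_size_def by (intro card_mono) (auto simp: subtree_def)
  qed
  finally show ?thesis .
qed

definition port_key :: "nat \<Rightarrow> int \<times> nat" where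
  "port_key v = (- int (subtree_size v), v)"

definition port :: "nat \<Rightarrow> nat" where
  "port v = rank port_key (children n p r (p v)) v"

lemma port_child: "v \<in> children n p r u \<Longrightarrow> port v = rank port_key (children n p r u) v"
  by (simp add: port_def mem_children_iff)

lemma port_in_range: "v \<in> children n p r u \<Longrightarrow> port v \<in> {1..card (children n p r u)}"
  using port_child rank_in_range[OF finite_children] by simp

lemma valid_ports: "valid_ports n p r port"
  unfolding valid_ports_def
proof (intro allI impI conjI)
  fix u
  let ?rank = "rank port_key (children n p r u)"
  have "inj_on port_key (children n p r u)"
    by (rule inj_onI) (simp add: port_key_def)
  with finite_children have "inj_on ?rank (children n p r u)"
    by (rule rank_inj_on)
  moreover have "inj_on port (children n p r u) = inj_on ?rank (children n p r u)"
    by (rule inj_on_cong) (rule port_child)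
  ultimately show "inj_on port (children n p r u)"
    by simp
  show "port ` children n p r u \<subseteq> {1..card (children n p r u)}"
    using port_in_range by blast
qed

lemma port_mult_subtree_size_le:
  assumes v: "v \<in> children n p r u"
  shows "port v * subtree_size v \<le> subtree_size u"
proof -
  define S where "S = {v' \<in> children n p r u. port_key v' \<le> port_key v}"
  have "port v * subtree_size v = (\<Sum>v'\<in>S. subtree_size v)"
    using port_child[OF v] by (simp add: S_def rank_def)
  also have "\<dots> \<le> (\<Sum>v'\<in>S. subtree_size v')"
  proof (rule sum_mono)
    fix v'
    assume "v' \<in> S"
    then have "- int (subtree_size v') \<le> - int (subtree_size v)"
      unfolding S_def port_key_def less_eq_prod_def by auto
    then show "subtree_size v \<le> subtree_size v'"
      by simp
  qed
  also have "\<dots> \<le> (\<Sum>v'\<in>children n p r u. subtree_size v')"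
    using finite_children by (intro sum_mono2) (auto simp: S_def)
  also have "\<dots> \<le> subtree_size u"
    by (rule sum_subtree_size_children_le)
  finally show ?thesis .
qed

definition port_path :: "nat \<Rightarrow> nat list" where
  "port_path w = map (\<lambda>i. port ((p ^^ (depth w - Suc i)) w)) [0..<depth w]"

lemma length_port_path [simp]: "length (port_path w) = depth w"
  by (simp add: port_path_def)

lemma port_path_root [simp]: "port_path r = []"
  using depth_eq_0_iff[OF root_less] by (simp add: port_path_def)

lemma port_path_parent:
  assumes "w < n" and "w \<noteq> r"
  shows "port_path w = port_path (p w) @ [port w]"
proof -
  have d: "depth w = Suc (depth (p w))"
    using assms by (rule depth_parent)
  have "(p ^^ (depth w - Suc i)) w = (p ^^ (depth (p w) - Suc i)) (p w)" if "i < depth (p w)" for i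
  proof -
    have "depth w - Suc i = Suc (depth (p w) - Suc i)"
      using that d by simp
    then show ?thesis
      by (simp only: funpow_Suc_right comp_apply)
  qed
  then show ?thesis
    unfolding port_path_def d by simp
qed

lemma prefix_port_path_funpow: "w < n \<Longrightarrow> prefix (port_path ((p ^^ j) w)) (port_path w)"
proof (induction j)
  case (Suc j)
  let ?a = "(p ^^ j) w"
  have "prefix (port_path (p ?a)) (port_path ?a)"
    using port_path_parent[of ?a] funpow_less[OF Suc.prems] by (cases "?a = r") auto
  with Suc show ?case
    by (auto intro: prefix_order.trans)
qed simp

lemma port_path_inject:
  assumes "u < n" and "w < n" and "port_path u = port_path w"
  shows "u = w"
  using assms
proof (induction "depth u" arbitrary: u w)
  case 0
  then show ?case
    using depth_eq_0_iff by (metis length_port_path)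
next
  case (Suc m)
  then have "u \<noteq> r" and "w \<noteq> r"
    by (metis depth_eq_0_iff length_port_path nat.distinct(1))+
  with Suc.prems have "port_path (p u) = port_path (p w)" and "port u = port w"
    using port_path_parent by simp_all
  moreover have "m = depth (p u)"
    using Suc.hyps(2) depth_parent[OF Suc.prems(1) \<open>u \<noteq> r\<close>] by simp
  ultimately have "p u = p w"
    using Suc.hyps(1) Suc.prems(1,2) parent_less by blast
  then have "u \<in> children n p r (p u)" and "w \<in> children n p r (p u)"
    using Suc.prems(1,2) \<open>u \<noteq> r\<close> \<open>w \<noteq> r\<close> by (simp_all add: mem_children_iff)
  then show ?case
    using valid_ports \<open>port u = port w\<close> Suc.prems parent_less unfolding valid_ports_def
    by (meson inj_onD)
qed

lemma port_path_pos: "w < n \<Longrightarrow> set (port_path w) \<subseteq> {0<..}"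
proof (induction rule: depth_induct)
  case (parent w)
  then have "0 < port w"
    using port_in_range[of w "p w"] by (simp add: mem_children_iff)
  with parent show ?case
    using port_path_parent by simp
qed simp

lemma prod_port_path_mult_subtree_size_le:
  "w < n \<Longrightarrow> prod_list (port_path w) * subtree_size w \<le> subtree_size r"
proof (induction rule: depth_induct)
  case (parent w)
  then have "prod_list (port_path w) * subtree_size w
      = prod_list (port_path (p w)) * (port w * subtree_size w)"
    using port_path_parent by simp
  also have "\<dots> \<le> prod_list (port_path (p w)) * subtree_size (p w)"
    using parent by (intro mult_left_mono port_mult_subtree_size_le) (auto simp: mem_children_iff)
  finally show ?case
    using parent.IH by simp
qed simp

lemma prod_port_path_le:
  assumes "w < n"
  shows "prod_list (port_path w) \<le> n"
proof -
  have "prod_list (port_path w) \<le> prod_list (port_path w) * subtree_size w"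
    using subtree_size_pos[OF assms] by simp
  also have "\<dots> \<le> subtree_size r"
    using assms by (rule prod_port_path_mult_subtree_size_le)
  also have "\<dots> \<le> n"
    by (rule subtree_size_le)
  finally show ?thesis .
qed

text \<open>Ports are at most \<open>n \<le> 2 ^ \<lceil>log n\<rceil>\<close>, so the base \<open>\<lceil>log n\<rceil> + 2\<close>, which the
  decoder can compute, bounds their bit lengths.\<close>

lemma codable_port_path:
  assumes "depth_le n p r d" and "w < n"
  shows "codable (nat \<lceil>log 2 (real n)\<rceil> + 2) d (port_path w)"
proof -
  have "depth w \<le> d"
    using assms depth_least unfolding depth_le_def by (meson order.trans)
  moreover have "bit_length x < nat \<lceil>log 2 (real n)\<rceil> + 2" if x: "x \<in> set (port_path w)" for x
  proof -
    have "0 < x"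
      using port_path_pos[OF assms(2)] x by auto
    moreover have "x \<le> prod_list (port_path w)"
      using port_path_pos[OF assms(2)]
      by (intro dvd_imp_le prod_list_dvd x) (auto simp: zero_less_iff_neq_zero prod_list_zero_iff)
    then have "x \<le> 2 ^ nat \<lceil>log 2 (real n)\<rceil>"
      using prod_port_path_le[OF assms(2)] le_two_power_ceiling_log[of n] assms(2) by linarith
    ultimately show ?thesis
      using bit_length_le by (simp add: less_Suc_eq_le)
  qed
  ultimately show ?thesis
    using port_path_pos[OF assms(2)] by (auto simp: codable_def)
qed

lemma strict_prefix_port_path_child:
  assumes "w < n" and v: "v \<in> children n p r u" and j: "(p ^^ j) w = v"
  shows "strict_prefix (port_path u) (port_path w) \<and> port_path w ! length (port_path u) = port v"
proof -
  have "port_path v = port_path u @ [port v]"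
    using v port_path_parent by (auto simp: mem_children_iff)
  moreover have "prefix (port_path v) (port_path w)"
    using prefix_port_path_funpow[OF assms(1), of j] j by simp
  ultimately obtain zs where "port_path w = port_path u @ port v # zs"
    by (auto elim: prefixE)
  then show ?thesis
    by (auto intro: strict_prefixI' simp del: length_port_path)
qed

lemma proper_desc_if_strict_prefix:
  assumes "u < n" and "w < n" and pre: "strict_prefix (port_path u) (port_path w)"
  shows "proper_desc p u w"
proof -
  define j where "j = depth w - depth u"
  have lt: "depth u < depth w"
    using prefix_length_less[OF pre] by simp
  then have "depth ((p ^^ j) w) = depth u"
    using depth_funpow[OF assms(2)] unfolding j_def by simp
  moreover have "prefix (port_path ((p ^^ j) w)) (port_path w)"
    using prefix_port_path_funpow[OF assms(2)] .
  moreover have "prefix (port_path u) (port_path w)"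
    using pre by (simp add: strict_prefix_def)
  ultimately have "port_path ((p ^^ j) w) = port_path u"
    by (metis length_port_path prefix_length_prefix prefix_order.antisym order.refl)
  then have "(p ^^ j) w = u"
    using port_path_inject funpow_less assms by blast
  moreover have "1 \<le> j"
    using lt unfolding j_def by simp
  ultimately show ?thesis
    unfolding proper_desc_def by blast
qed

end

definition next_port :: "nat list \<Rightarrow> nat list \<Rightarrow> nat" where
  "next_port xs ys = (if strict_prefix xs ys then ys ! length xs else 0)"

lemma (in parent_tree) routes_next_port:
  assumes "\<And>u w. u < n \<Longrightarrow> w < n \<Longrightarrow>
    dec (nat \<lceil>log 2 (real n)\<rceil>) (lab u) (lab w) = next_port (port_path u) (port_path w)"
  shows "routes n p r lab port dec"
  unfolding routes_def Let_def
proof (intro allI impI conjI ballI)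
  fix u w
  assume u: "u < n" and w: "w < n"
  show "dec (nat \<lceil>log 2 (real n)\<rceil>) (lab u) (lab w) = 0" if "\<not> proper_desc p u w"
    using that assms[OF u w] proper_desc_if_strict_prefix[OF u w] by (auto simp: next_port_def)
  show "dec (nat \<lceil>log 2 (real n)\<rceil>) (lab u) (lab w) = port v"
    if "v \<in> children n p r u" and "\<exists>j. (p ^^ j) w = v" for v
    using that assms[OF u w] strict_prefix_port_path_child[OF w] by (auto simp: next_port_def)
qed

lemma bit_length_le_log_plus_log_log:
  fixes n d m :: nat
  defines "K \<equiv> nat \<lceil>log 2 (real n)\<rceil>"
  assumes n: "16 \<le> n" and m: "m < (K + 2) ^ d * 2 ^ d * n"
  shows "real (bit_length m) \<le> log 2 (real n) + real (2 * d + 1) * log 2 (log 2 (real n))"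
proof -
  define L where "L = log 2 (real n)"
  have L: "4 \<le> L"
    unfolding L_def using n by (simp add: le_log_iff)
  then have logL: "2 \<le> log 2 L"
    by (simp add: le_log_iff)
  have "real (K + 2) \<le> 2 * L"
    unfolding K_def L_def[symmetric] using L by linarith
  then have logK: "log 2 (real (K + 2)) \<le> 1 + log 2 L"
    using L log_mono[of 2 "real (K + 2)" "2 * L"] by (simp add: log_mult)
  have "real (bit_length m) < 1 + log 2 (real ((K + 2) ^ d * 2 ^ d * n))"
    using m by (rule bit_length_less_log)
  also have "\<dots> = 1 + d * log 2 (real (K + 2)) + d + L"
    unfolding L_def using n by (simp add: log_mult log_nat_power)
  also have "\<dots> \<le> 1 + d * (1 + log 2 L) + d + L"
    using logK by (simp add: mult_left_mono)
  also have "\<dots> \<le> L + real (2 * d + 1) * log 2 L"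
    using logL mult_left_mono[OF logL, of "real d"] by (simp add: algebra_simps)
  finally show ?thesis
    unfolding L_def by simp
qed

lemma (in parent_tree) bit_length_label_le:
  assumes "depth_le n p r d" and "16 \<le> n" and "u < n"
  shows "real (bit_length (seq_code (nat \<lceil>log 2 (real n)\<rceil> + 2) d (port_path u)))
    \<le> log 2 (real n) + real (2 * d + 1) * log 2 (log 2 (real n))"
proof -
  let ?B = "nat \<lceil>log 2 (real n)\<rceil> + 2"
  have "seq_code ?B d (port_path u) < ?B ^ d * 2 ^ d * prod_list (port_path u)"
    using codable_port_path[OF assms(1,3)] by (intro seq_code_less) simp_all
  also have "\<dots> \<le> ?B ^ d * 2 ^ d * n"
    using prod_port_path_le[OF assms(3)] by simp
  finally show ?thesis
    using assms(2) by (rule bit_length_le_log_plus_log_log[rotated])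
qed

definition route_decoder :: "nat \<Rightarrow> nat \<Rightarrow> bool list \<Rightarrow> bool list \<Rightarrow> nat" where
  "route_decoder d K a b = next_port (seq_decode (K + 2) d a) (seq_decode (K + 2) d b)"

theorem mainTheorem6:
  fixes d :: nat
  shows "\<exists>(c::real) (N::nat) (dec :: nat \<Rightarrow> bool list \<Rightarrow> bool list \<Rightarrow> nat).
     \<forall>n p r. rooted_tree n p r \<and> depth_le n p r d \<longrightarrow>
       (\<exists>(lab :: nat \<Rightarrow> bool list) (port :: nat \<Rightarrow> nat).
          valid_ports n p r port \<and> routes n p r lab port dec \<and>
          (n \<ge> N \<longrightarrow> (\<forall>u<n. real (length (lab u)) \<le> log 2 (real n) + c * log 2 (log 2 (real n)))))"
proof (intro exI[of _ "real (2 * d + 1)"] exI[of _ 16] exI[of _ "route_decoder d"] allI impI, elim conjE)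
  fix n p r
  assume "rooted_tree n p r" and depth: "depth_le n p r d"
  then interpret parent_tree n p r
    by unfold_locales
  define K where "K = nat \<lceil>log 2 (real n)\<rceil>"
  define lab where "lab u = bits (seq_code (K + 2) d (port_path u))" for u
  have decode: "seq_decode (K + 2) d (lab u) = port_path u" if "u < n" for u
    unfolding lab_def K_def using codable_port_path[OF depth that]
    by (intro seq_decode_bits_seq_code) simp_all
  have "routes n p r lab port (route_decoder d)"
    by (rule routes_next_port) (simp only: route_decoder_def decode flip: K_def)
  moreover have "real (length (lab u)) \<le> log 2 (real n) + real (2 * d + 1) * log 2 (log 2 (real n))"
    if "16 \<le> n" and "u < n" for u
    unfolding lab_def K_def using depth that by (rule bit_length_label_le)
  ultimately show "\<exists>lab port. valid_ports n p r port \<and> routes n p r lab port (route_decoder d) \<and>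
      (16 \<le> n \<longrightarrow> (\<forall>u<n. real (length (lab u)) \<le> log 2 (real n) + real (2 * d + 1) * log 2 (log 2 (real n))))"
    using valid_ports by blast
qed

end
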